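(* Let $\{Y_k\}$ be a fourth-order stationary sequence with $EY_k=0$, autocovariances $\gamma_j=\mathrm{Cov}(Y_0,Y_j)$ and fourth-order cumulants $\kappa(h,r,s)$, satisfying: (a) $n^{-1/2}\sum_{1\le j\le nt}Y_j\xrightarrow{d}\sigma W(t)$ in $D[0,1]$ for some $\sigma>0$; (b) $\sum_j|\gamma_j|<\infty$; (c) $\sup_h\sum_{r,s}|\kappa(h,r,s)|<\infty$. For each $n$ let $X_i=\mu+Y_i$ for $1\le i\le k^*$ and $X_i=\mu+\Delta+Y_i$ for $k^*<i\le n$, where $\mu$ is a constant and $k^*=k^*(n)$, $\Delta=\Delta(n)$ satisfy $k^*=[n\theta]$ for some $0<\theta<1$, $n\Delta^2\to\infty$, $\Delta^2|\hat k-k^*|=O_P(1)$ and $q(n)\Delta^2=O(1)$. Suppose $q(n)\to\infty$ and $q(n)/n\to0$. Then $T_n\xrightarrow{P}\infty$.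
   Context: A sequence is fourth-order stationary if it has finite fourth moments and its joint moments of order at most four are shift invariant; $\kappa(h,r,s)=E[Y_kY_{k+h}Y_{k+r}Y_{k+s}]-(\gamma_h\gamma_{r-s}+\gamma_r\gamma_{h-s}+\gamma_s\gamma_{h-r})$. $q(n)$ is a sequence of positive integers, $\omega_j(q)=1-j/(q+1)$, $\bar X_n=\frac1n\sum_{i\le n}X_i$, $\hat\gamma_j=\frac1n\sum_{1\le i\le n-j}(X_i-\bar X_n)(X_{i+j}-\bar X_n)$, $s_n^2=\hat\gamma_0+2\sum_{1\le j\le q(n)}\omega_j(q(n))\hat\gamma_j$, $T_n=\frac1{n^{1/2}s_n}\max_{1\le k\le n}|\sum_{i\le k}X_i-\frac kn\sum_{i\le n}X_i|$, and $\hat k=\min\{k:\max_{1\le i\le n}|\sum_{j\le i}X_j-\frac in\sum_{j\le n}X_j|=|\sum_{j\le k}X_j-\frac kn\sum_{j\le n}X_j|\}$. *)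

theory Defs
  imports "HOL-Probability.Probability" "HOL-Library.Landau_Symbols"
begin

definition fourth_order_stationary :: "'a measure \<Rightarrow> (int \<Rightarrow> 'a \<Rightarrow> real) \<Rightarrow> bool" where
  "fourth_order_stationary M Y \<longleftrightarrow>
     (\<forall>k. Y k \<in> borel_measurable M \<and> integrable M (\<lambda>\<omega>. (Y k \<omega>) ^ 4)) \<and>
     (\<forall>is :: int list. \<forall>c :: int. length is \<le> 4 \<longrightarrow>
        (\<integral>\<omega>. prod_list (map (\<lambda>i. Y (i + c) \<omega>) is) \<partial>M) =
        (\<integral>\<omega>. prod_list (map (\<lambda>i. Y i \<omega>) is) \<partial>M))"

definition autocov :: "'a measure \<Rightarrow> (int \<Rightarrow> 'a \<Rightarrow> real) \<Rightarrow> int \<Rightarrow> real" where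
  "autocov M Y j =
     (\<integral>\<omega>. (Y 0 \<omega> - (\<integral>\<omega>'. Y 0 \<omega>' \<partial>M)) * (Y j \<omega> - (\<integral>\<omega>'. Y j \<omega>' \<partial>M)) \<partial>M)"

definition cum4 :: "'a measure \<Rightarrow> (int \<Rightarrow> 'a \<Rightarrow> real) \<Rightarrow> int \<Rightarrow> int \<Rightarrow> int \<Rightarrow> real" where
  "cum4 M Y h r s =
     (\<integral>\<omega>. Y 0 \<omega> * Y h \<omega> * Y r \<omega> * Y s \<omega> \<partial>M)
     - (autocov M Y h * autocov M Y (r - s) + autocov M Y r * autocov M Y (h - s)
        + autocov M Y s * autocov M Y (h - r))"

definition std_BM_01 :: "'b measure \<Rightarrow> (real \<Rightarrow> 'b \<Rightarrow> real) \<Rightarrow> bool" where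
  "std_BM_01 N W \<longleftrightarrow> prob_space N \<and>
     (\<forall>t\<in>{0..1}. W t \<in> borel_measurable N) \<and>
     (\<forall>\<omega>\<in>space N. W 0 \<omega> = 0 \<and> continuous_on {0..1} (\<lambda>t. W t \<omega>)) \<and>
     (\<forall>s t. 0 \<le> s \<and> s < t \<and> t \<le> 1 \<longrightarrow>
        distributed N lborel (\<lambda>\<omega>. W t \<omega> - W s \<omega>) (normal_density 0 (sqrt (t - s)))) \<and>
     (\<forall>(m::nat) (ts :: nat \<Rightarrow> real). 0 \<le> ts 0 \<and> ts m \<le> 1 \<and> (\<forall>i<m. ts i < ts (Suc i)) \<longrightarrow>
        prob_space.indep_vars N (\<lambda>_. borel) (\<lambda>i \<omega>. W (ts (Suc i)) \<omega> - W (ts i) \<omega>) {..<m})"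

definition cadlag01 :: "(real \<Rightarrow> real) \<Rightarrow> bool" where
  "cadlag01 x \<longleftrightarrow> (\<forall>t\<in>{0..<1}. (x \<longlongrightarrow> x t) (at_right t)) \<and>
                   (\<forall>t\<in>{0<..1}. \<exists>l. (x \<longlongrightarrow> l) (at_left t))"

definition timechange01 :: "(real \<Rightarrow> real) \<Rightarrow> bool" where
  "timechange01 lam \<longleftrightarrow> continuous_on {0..1} lam \<and> strict_mono_on {0..1} lam \<and> lam 0 = 0 \<and> lam 1 = 1"

definition skorokhod_dist :: "(real \<Rightarrow> real) \<Rightarrow> (real \<Rightarrow> real) \<Rightarrow> real" where
  "skorokhod_dist x y = Inf {max (SUP t\<in>{0..1}. \<bar>lam t - t\<bar>) (SUP t\<in>{0..1}. \<bar>x t - y (lam t)\<bar>) | lam. timechange01 lam}"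

definition conv_dist_D :: "'a measure \<Rightarrow> (nat \<Rightarrow> 'a \<Rightarrow> real \<Rightarrow> real) \<Rightarrow> 'b measure \<Rightarrow> ('b \<Rightarrow> real \<Rightarrow> real) \<Rightarrow> bool" where
  "conv_dist_D M S N Z \<longleftrightarrow>
     (\<forall>F :: (real \<Rightarrow> real) \<Rightarrow> real.
        (\<exists>B. \<forall>x. cadlag01 x \<longrightarrow> \<bar>F x\<bar> \<le> B) \<and>
        (\<forall>x. cadlag01 x \<longrightarrow> (\<forall>e>0. \<exists>d>0. \<forall>y. cadlag01 y \<and> skorokhod_dist x y < d \<longrightarrow> \<bar>F y - F x\<bar> < e))
        \<longrightarrow> ((\<lambda>n. \<integral>\<omega>. F (S n \<omega>) \<partial>M) \<longlonglongrightarrow> (\<integral>\<omega>. F (Z \<omega>) \<partial>N)))"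

definition partial_sum_proc :: "(int \<Rightarrow> 'a \<Rightarrow> real) \<Rightarrow> nat \<Rightarrow> 'a \<Rightarrow> real \<Rightarrow> real" where
  "partial_sum_proc Y n \<omega> t = (\<Sum>j\<in>{1..\<lfloor>real n * t\<rfloor>}. Y j \<omega>) / sqrt (real n)"

definition bounded_in_prob :: "'a measure \<Rightarrow> (nat \<Rightarrow> 'a \<Rightarrow> real) \<Rightarrow> bool" where
  "bounded_in_prob M Z \<longleftrightarrow>
     (\<forall>\<epsilon>>0. \<exists>C. \<exists>N0. \<forall>n\<ge>N0. measure M {\<omega>\<in>space M. \<bar>Z n \<omega>\<bar> > C} < \<epsilon>)"

definition cp_sample :: "real \<Rightarrow> real \<Rightarrow> nat \<Rightarrow> (int \<Rightarrow> 'a \<Rightarrow> real) \<Rightarrow> 'a \<Rightarrow> nat \<Rightarrow> real" where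
  "cp_sample \<mu> D k Y \<omega> i = \<mu> + (if i \<le> k then 0 else D) + Y (int i) \<omega>"

definition xbar :: "(nat \<Rightarrow> real) \<Rightarrow> nat \<Rightarrow> real" where
  "xbar x n = (\<Sum>i=1..n. x i) / real n"

definition gamma_hat :: "(nat \<Rightarrow> real) \<Rightarrow> nat \<Rightarrow> nat \<Rightarrow> real" where
  "gamma_hat x n j = (\<Sum>i=1..n-j. (x i - xbar x n) * (x (i + j) - xbar x n)) / real n"

definition bartlett :: "nat \<Rightarrow> nat \<Rightarrow> real" where
  "bartlett j q = 1 - real j / (real q + 1)"

definition s2 :: "(nat \<Rightarrow> real) \<Rightarrow> nat \<Rightarrow> nat \<Rightarrow> real" where
  "s2 x n q = gamma_hat x n 0 + 2 * (\<Sum>j=1..q. bartlett j q * gamma_hat x n j)"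

definition cusum :: "(nat \<Rightarrow> real) \<Rightarrow> nat \<Rightarrow> nat \<Rightarrow> real" where
  "cusum x n k = \<bar>(\<Sum>i=1..k. x i) - real k / real n * (\<Sum>i=1..n. x i)\<bar>"

definition Tstat :: "(nat \<Rightarrow> real) \<Rightarrow> nat \<Rightarrow> nat \<Rightarrow> real" where
  "Tstat x n q = Max (cusum x n ` {1..n}) / (sqrt (real n) * sqrt (s2 x n q))"

definition khat :: "(nat \<Rightarrow> real) \<Rightarrow> nat \<Rightarrow> nat" where
  "khat x n = (LEAST k. k \<in> {1..n} \<and> cusum x n k = Max (cusum x n ` {1..n}))"

end

theory Submission
  imports Defs
begin

(* The Bartlett estimator is a positive semidefinite quadratic form: n (q + 1) s_n^2 is the sum,
   over the n + q windows {t - q..t}, of the squared window sums of the centred sample.  Writing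
   the sample as noise plus a step of height Delta therefore gives
   s_n^2 <= 2 s^2(noise) + O(q Delta^2), and for noise with summable autocovariances
   E s^2(noise) = O(1) as soon as q < n; with q Delta^2 = O(1) this makes s_n^2 = O_P(1).
   At the true change point k = [n theta] the CUSUM has drift k (n - k) |Delta| / n, of order
   n |Delta|, while its noise part is O_P(sqrt n) by Chebyshev's inequality.  Hence
   T_n >= c sqrt (n Delta^2) - O_P(1), which tends to infinity. *)

section \<open>The Bartlett estimator\<close>

definition centered :: "(nat \<Rightarrow> real) \<Rightarrow> nat \<Rightarrow> nat \<Rightarrow> real" where
  "centered x n i = x i - xbar x n"

definition window :: "nat \<Rightarrow> nat \<Rightarrow> nat \<Rightarrow> nat set" where
  "window n q t = {i\<in>{1..n}. i \<le> t \<and> t \<le> i + q}"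

lemma gamma_hat_eq_lag_sum:
  "real n * gamma_hat x n h =
     (\<Sum>i\<in>{1..n}. \<Sum>j\<in>{1..n}. of_bool (j = i + h) * (centered x n i * centered x n j))"
proof (cases "n = 0")
  case False
  have "{1..n} \<inter> {j. j = i + h} = (if i + h \<le> n then {i + h} else {})" if "i \<ge> 1" for i
    using that by auto
  then have "(\<Sum>i\<in>{1..n}. \<Sum>j\<in>{1..n}. of_bool (j = i + h) * (centered x n i * centered x n j))
      = (\<Sum>i\<in>{1..n}. of_bool (i + h \<le> n) * (centered x n i * centered x n (i + h)))"
    by (intro sum.cong) auto
  also have "\<dots> = (\<Sum>i\<in>{1..n-h}. centered x n i * centered x n (i + h))"
  proof -
    have "{1..n} \<inter> {i. i + h \<le> n} = {1..n-h}" by auto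
    then show ?thesis by simp
  qed
  finally show ?thesis using False by (simp add: gamma_hat_def centered_def)
qed (simp add: gamma_hat_def)

lemma gamma_hat_eq_lag_sum':
  "real n * gamma_hat x n h =
     (\<Sum>i\<in>{1..n}. \<Sum>j\<in>{1..n}. of_bool (i = j + h) * (centered x n i * centered x n j))"
  unfolding gamma_hat_eq_lag_sum by (subst sum.swap) (simp add: mult.commute)

lemma window_overlap_card:
  assumes "i \<in> {1..n}" "j \<in> {1..n}"
  shows "real (card {t\<in>{1..n+q}. i \<in> window n q t \<and> j \<in> window n q t}) =
    (real q + 1) * of_bool (i = j) +
    (\<Sum>h=1..q. (real q + 1 - real h) * (of_bool (j = i + h) + of_bool (i = j + h)))"
proof -
  have "{t\<in>{1..n+q}. i \<in> window n q t \<and> j \<in> window n q t} = {max i j..min i j + q}"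
    using assms by (auto simp: window_def)
  then have card: "real (card {t\<in>{1..n+q}. i \<in> window n q t \<and> j \<in> window n q t}) =
      real (Suc (min i j + q) - max i j)"
    by simp
  have lag: "(\<Sum>h=1..q. (real q + 1 - real h) * (of_bool (b = a + h) + of_bool (a = b + h)))
      = of_bool (b - a \<le> q) * (real q + 1 - real (b - a))" if "a < b" for a b :: nat
  proof -
    have "{1..q} \<inter> {h. b = a + h} = (if b - a \<le> q then {b - a} else {})"
      using that by auto
    then show ?thesis using that by (simp add: distrib_left sum.distrib)
  qed
  show ?thesis
  proof (cases i j rule: linorder_cases)
    case less
    then show ?thesis
      unfolding card using lag[OF less] by (simp add: add.commute)
  next
    case greater
    then show ?thesis
      unfolding card using lag[OF greater] by simp
  qed (unfold card, simp)
qed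

lemma sum_window_sums_sq:
  "(\<Sum>t\<in>{1..n+q}. (\<Sum>i\<in>window n q t. f i)\<^sup>2) =
    (\<Sum>i\<in>{1..n}. \<Sum>j\<in>{1..n}. ((real q + 1) * of_bool (i = j) +
      (\<Sum>h=1..q. (real q + 1 - real h) * (of_bool (j = i + h) + of_bool (i = j + h)))) * (f i * f j))"
proof -
  let ?in = "\<lambda>i t. of_bool (i \<in> window n q t) :: real"
  have "(\<Sum>t\<in>{1..n+q}. (\<Sum>i\<in>window n q t. f i)\<^sup>2)
      = (\<Sum>t\<in>{1..n+q}. \<Sum>i\<in>{1..n}. \<Sum>j\<in>{1..n}. ?in i t * ?in j t * (f i * f j))"
  proof (intro sum.cong refl)
    fix t
    have "window n q t = {1..n} \<inter> {i. i \<in> window n q t}"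
      by (auto simp: window_def)
    then have "(\<Sum>i\<in>window n q t. f i) = (\<Sum>i\<in>{1..n}. ?in i t * f i)"
      by simp
    then show "(\<Sum>i\<in>window n q t. f i)\<^sup>2 = (\<Sum>i\<in>{1..n}. \<Sum>j\<in>{1..n}. ?in i t * ?in j t * (f i * f j))"
      by (simp only: power2_eq_square sum_product) (simp only: mult_ac)
  qed
  also have "\<dots> = (\<Sum>i\<in>{1..n}. \<Sum>j\<in>{1..n}. \<Sum>t\<in>{1..n+q}. ?in i t * ?in j t * (f i * f j))"
    by (rule trans[OF sum.swap], rule sum.cong[OF refl], rule sum.swap)
  also have "\<dots> = (\<Sum>i\<in>{1..n}. \<Sum>j\<in>{1..n}.
      real (card {t\<in>{1..n+q}. i \<in> window n q t \<and> j \<in> window n q t}) * (f i * f j))"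
    by (simp add: of_bool_conj[symmetric] Int_def)
  also have "\<dots> = (\<Sum>i\<in>{1..n}. \<Sum>j\<in>{1..n}. ((real q + 1) * of_bool (i = j) +
      (\<Sum>h=1..q. (real q + 1 - real h) * (of_bool (j = i + h) + of_bool (i = j + h)))) * (f i * f j))"
    by (intro sum.cong refl, subst window_overlap_card) auto
  finally show ?thesis .
qed

lemma s2_eq_window_sums:
  "s2 x n q = (\<Sum>t\<in>{1..n+q}. (\<Sum>i\<in>window n q t. centered x n i)\<^sup>2) / (real n * (real q + 1))"
proof (cases "n = 0")
  case False
  let ?d = "centered x n"
  have "(\<Sum>t\<in>{1..n+q}. (\<Sum>i\<in>window n q t. ?d i)\<^sup>2)
      = (\<Sum>i\<in>{1..n}. \<Sum>j\<in>{1..n}. (real q + 1) * (of_bool (j = i + 0) * (?d i * ?d j)) +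
      (\<Sum>h=1..q. (real q + 1 - real h) *
        (of_bool (j = i + h) * (?d i * ?d j) + of_bool (i = j + h) * (?d i * ?d j))))"
    unfolding sum_window_sums_sq by (intro sum.cong refl) (auto simp: algebra_simps sum_distrib_left)
  also have "\<dots> = (real q + 1) * (\<Sum>i\<in>{1..n}. \<Sum>j\<in>{1..n}. of_bool (j = i + 0) * (?d i * ?d j))
      + (\<Sum>h=1..q. (real q + 1 - real h) *
          ((\<Sum>i\<in>{1..n}. \<Sum>j\<in>{1..n}. of_bool (j = i + h) * (?d i * ?d j))
         + (\<Sum>i\<in>{1..n}. \<Sum>j\<in>{1..n}. of_bool (i = j + h) * (?d i * ?d j))))"
    by (simp only: sum.distrib distrib_left sum_distrib_left sum.swap[of _ "{1..q}"])
  also have "\<dots> = real n * (real q + 1) * s2 x n q"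
  proof -
    have weight: "real q + 1 - real h = (real q + 1) * bartlett h q" for h
      by (simp add: bartlett_def field_simps)
    show ?thesis
      by (simp only: gamma_hat_eq_lag_sum[symmetric] gamma_hat_eq_lag_sum'[symmetric] weight)
        (simp add: s2_def sum_distrib_left algebra_simps)
  qed
  finally show ?thesis using False by simp
qed (simp add: s2_def gamma_hat_def)

lemma s2_nonneg: "0 \<le> s2 x n q"
  by (simp add: s2_eq_window_sums sum_nonneg)

lemma card_window_le: "card (window n q t) \<le> q + 1"
proof -
  have "window n q t \<subseteq> {t - q..t}" by (auto simp: window_def)
  then have "card (window n q t) \<le> card {t - q..t}" by (intro card_mono) auto
  then show ?thesis by simp
qed

lemma centered_add: "centered (\<lambda>i. x i + y i) n i = centered x n i + centered y n i"
  by (simp add: centered_def xbar_def sum.distrib add_divide_distrib)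

lemma s2_add_le: "s2 (\<lambda>i. x i + y i) n q \<le> 2 * s2 x n q + 2 * s2 y n q"
proof -
  let ?w = "\<lambda>x t. (\<Sum>i\<in>window n q t. centered x n i)\<^sup>2"
  have "(a + b)\<^sup>2 \<le> 2 * a\<^sup>2 + 2 * b\<^sup>2" for a b :: real
    using sum_squares_ge_zero[of "a - b" 0] by (simp add: power2_eq_square algebra_simps)
  then have "?w (\<lambda>i. x i + y i) t \<le> 2 * ?w x t + 2 * ?w y t" for t
    by (simp add: centered_add sum.distrib)
  then have "(\<Sum>t\<in>{1..n+q}. ?w (\<lambda>i. x i + y i) t) \<le>
      2 * (\<Sum>t\<in>{1..n+q}. ?w x t) + 2 * (\<Sum>t\<in>{1..n+q}. ?w y t)"
    by (simp add: sum_mono sum.distrib[symmetric] sum_distrib_left)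
  then show ?thesis
    unfolding s2_eq_window_sums by (simp add: divide_right_mono add_divide_distrib[symmetric])
qed

lemma s2_le_of_centered_bound:
  assumes "\<And>i. i \<in> {1..n} \<Longrightarrow> \<bar>centered x n i\<bar> \<le> B"
  shows "s2 x n q \<le> (real n + real q) * (real q + 1) * B\<^sup>2 / real n"
proof (cases "n = 0")
  case False
  then have "0 \<le> B" using assms[of 1] by auto
  have "(\<Sum>i\<in>window n q t. centered x n i)\<^sup>2 \<le> ((real q + 1) * B)\<^sup>2" for t
  proof -
    have "\<bar>\<Sum>i\<in>window n q t. centered x n i\<bar> \<le> (\<Sum>i\<in>window n q t. \<bar>centered x n i\<bar>)"
      by (rule sum_abs)
    also have "\<dots> \<le> (\<Sum>i\<in>window n q t. B)"
      using assms by (intro sum_mono) (auto simp: window_def)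
    also have "\<dots> = real (card (window n q t)) * B"
      by simp
    also have "\<dots> \<le> (real q + 1) * B"
      using card_window_le[of n q t] \<open>0 \<le> B\<close> by (intro mult_right_mono) auto
    finally have "\<bar>\<Sum>i\<in>window n q t. centered x n i\<bar> \<le> \<bar>(real q + 1) * B\<bar>"
      using \<open>0 \<le> B\<close> by simp
    then show ?thesis by (simp only: abs_le_square_iff)
  qed
  then have "(\<Sum>t\<in>{1..n+q}. (\<Sum>i\<in>window n q t. centered x n i)\<^sup>2) \<le> (\<Sum>t\<in>{1..n+q}. ((real q + 1) * B)\<^sup>2)"
    by (intro sum_mono)
  then have "s2 x n q \<le> (real n + real q) * ((real q + 1) * B)\<^sup>2 / (real n * (real q + 1))"
    unfolding s2_eq_window_sums by (simp add: divide_right_mono)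
  then show ?thesis by (simp add: power2_eq_square mult_ac)
qed (simp add: s2_def gamma_hat_def)

definition s2_majorant :: "(nat \<Rightarrow> real) \<Rightarrow> nat \<Rightarrow> nat \<Rightarrow> real" where
  "s2_majorant x n q = 2 * (\<Sum>t\<in>{1..n+q}. (\<Sum>i\<in>window n q t. x i)\<^sup>2) / (real n * (real q + 1))
     + 2 * (real n + real q) * (real q + 1) / real n * (xbar x n)\<^sup>2"

lemma s2_le_s2_majorant: "s2 x n q \<le> s2_majorant x n q"
proof -
  have "(\<Sum>i\<in>window n q t. centered x n i)\<^sup>2 \<le>
      2 * (\<Sum>i\<in>window n q t. x i)\<^sup>2 + 2 * ((real q + 1) * xbar x n)\<^sup>2" for t
  proof -
    have "(a - b)\<^sup>2 \<le> 2 * a\<^sup>2 + 2 * b\<^sup>2" for a b :: real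
      using sum_squares_ge_zero[of "a + b" 0] by (simp add: power2_eq_square algebra_simps)
    moreover have "(\<Sum>i\<in>window n q t. centered x n i) =
        (\<Sum>i\<in>window n q t. x i) - real (card (window n q t)) * xbar x n"
      by (simp add: centered_def sum_subtractf)
    ultimately have "(\<Sum>i\<in>window n q t. centered x n i)\<^sup>2 \<le>
        2 * (\<Sum>i\<in>window n q t. x i)\<^sup>2 + 2 * (real (card (window n q t)) * xbar x n)\<^sup>2"
      by simp
    moreover have "(real (card (window n q t)) * xbar x n)\<^sup>2 \<le> ((real q + 1) * xbar x n)\<^sup>2"
    proof -
      have "\<bar>real (card (window n q t)) * xbar x n\<bar> \<le> \<bar>(real q + 1) * xbar x n\<bar>"
        using card_window_le[of n q t] by (simp add: abs_mult mult_right_mono)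
      then show ?thesis by (simp only: abs_le_square_iff)
    qed
    ultimately show ?thesis by linarith
  qed
  then have "s2 x n q \<le> (\<Sum>t\<in>{1..n+q}. 2 * (\<Sum>i\<in>window n q t. x i)\<^sup>2 + 2 * ((real q + 1) * xbar x n)\<^sup>2)
      / (real n * (real q + 1))"
    unfolding s2_eq_window_sums by (intro divide_right_mono sum_mono) simp_all
  also have "\<dots> = 2 * (\<Sum>t\<in>{1..n+q}. (\<Sum>i\<in>window n q t. x i)\<^sup>2) / (real n * (real q + 1))
     + 2 * (real n + real q) * (real q + 1) / real n * (xbar x n)\<^sup>2"
    by (simp add: sum.distrib sum_distrib_left[symmetric] add_divide_distrib power2_eq_square)
  finally show ?thesis unfolding s2_majorant_def .
qed

lemma centered_abs_le_range:
  assumes "\<And>i. i \<in> {1..n} \<Longrightarrow> a \<le> x i \<and> x i \<le> b" and "i \<in> {1..n}"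
  shows "\<bar>centered x n i\<bar> \<le> b - a"
proof -
  have "(\<Sum>i=1..n. a) \<le> (\<Sum>i=1..n. x i)" "(\<Sum>i=1..n. x i) \<le> (\<Sum>i=1..n. b)"
    by (rule sum_mono; use assms(1) in auto)+
  moreover have "n > 0" using assms(2) by auto
  ultimately have "a \<le> xbar x n" "xbar x n \<le> b"
    by (simp_all add: xbar_def field_simps mult.commute)
  then show ?thesis using assms(1)[OF assms(2)] by (auto simp: centered_def)
qed

lemma centered_eq_0_if_s2_eq_0:
  assumes "s2 x n q = 0" "i \<in> {1..n}"
  shows "centered x n i = 0"
  using assms(2)
proof (induction i rule: less_induct)
  case (less i)
  have "(\<Sum>t\<in>{1..n+q}. (\<Sum>j\<in>window n q t. centered x n j)\<^sup>2) = 0"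
    using assms(1) less.prems by (simp add: s2_eq_window_sums)
  then have "(\<Sum>j\<in>window n q i. centered x n j)\<^sup>2 = 0"
    using less.prems by (subst (asm) sum_nonneg_eq_0_iff) auto
  moreover have "(\<Sum>j\<in>window n q i. centered x n j) = centered x n i"
  proof -
    have "(\<Sum>j\<in>window n q i. centered x n j) = centered x n i + (\<Sum>j\<in>window n q i - {i}. centered x n j)"
      using less.prems by (intro sum.remove) (auto simp: window_def)
    moreover have "(\<Sum>j\<in>window n q i - {i}. centered x n j) = 0"
      using less.IH by (intro sum.neutral) (auto simp: window_def)
    ultimately show ?thesis by simp
  qed
  ultimately show ?case by simp
qed

lemma cusum_eq_sum_centered: "cusum x n k = \<bar>\<Sum>i=1..k. centered x n i\<bar>"
  by (simp add: cusum_def centered_def xbar_def sum_subtractf)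

section \<open>The change-point sample\<close>

lemma s2_cp_sample_le:
  "s2 (cp_sample \<mu> D k Y \<omega>) n q \<le>
     2 * s2 (\<lambda>i. Y (int i) \<omega>) n q + 2 * ((real n + real q) * (real q + 1) * D\<^sup>2 / real n)"
proof -
  let ?m = "\<lambda>i. \<mu> + (if i \<le> k then 0 else D)"
  have "cp_sample \<mu> D k Y \<omega> = (\<lambda>i. ?m i + Y (int i) \<omega>)"
    by (simp add: fun_eq_iff cp_sample_def)
  then have "s2 (cp_sample \<mu> D k Y \<omega>) n q \<le> 2 * s2 ?m n q + 2 * s2 (\<lambda>i. Y (int i) \<omega>) n q"
    using s2_add_le by metis
  moreover have "\<bar>centered ?m n i\<bar> \<le> \<bar>D\<bar>" if "i \<in> {1..n}" for i
  proof -
    have "\<bar>centered ?m n i\<bar> \<le> (\<mu> + max 0 D) - (\<mu> + min 0 D)"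
      using that by (intro centered_abs_le_range) auto
    then show ?thesis by (simp add: max_def min_def split: if_splits)
  qed
  then have "s2 ?m n q \<le> (real n + real q) * (real q + 1) * D\<^sup>2 / real n"
    using s2_le_of_centered_bound[of n ?m "\<bar>D\<bar>" q] by simp
  ultimately show ?thesis by linarith
qed

lemma cusum_cp_sample_ge:
  assumes "k \<le> n"
  shows "real k * real (n - k) * \<bar>D\<bar> / real n - \<bar>\<Sum>i=1..k. Y (int i) \<omega>\<bar> - \<bar>\<Sum>i=1..n. Y (int i) \<omega>\<bar>
    \<le> cusum (cp_sample \<mu> D k Y \<omega>) n k"
proof (cases "n = 0")
  case False
  let ?Sk = "\<Sum>i=1..k. Y (int i) \<omega>" and ?Sn = "\<Sum>i=1..n. Y (int i) \<omega>"
    and ?c = "real k * real (n - k) * D / real n"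
  have "(\<Sum>i=1..n. cp_sample \<mu> D k Y \<omega> i) = real n * \<mu> + real (n - k) * D + ?Sn"
  proof -
    have "{1..n} \<inter> - {i. i \<le> k} = {k<..n}" using assms by auto
    then show ?thesis by (simp add: cp_sample_def sum.distrib sum.If_cases)
  qed
  moreover have "(\<Sum>i=1..k. cp_sample \<mu> D k Y \<omega> i) = real k * \<mu> + ?Sk"
    by (simp add: cp_sample_def sum.distrib)
  ultimately have "(\<Sum>i=1..k. cp_sample \<mu> D k Y \<omega> i) - real k / real n * (\<Sum>i=1..n. cp_sample \<mu> D k Y \<omega> i)
      = ?Sk - real k / real n * ?Sn - ?c"
    using False by (simp add: field_simps)
  then have "cusum (cp_sample \<mu> D k Y \<omega>) n k =
      \<bar>?Sk - real k / real n * ?Sn - ?c\<bar>"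
    by (simp add: cusum_def)
  moreover have "\<bar>real k / real n * ?Sn\<bar> \<le> \<bar>?Sn\<bar>"
  proof -
    have "real k * \<bar>?Sn\<bar> \<le> real n * \<bar>?Sn\<bar>"
      using assms by (intro mult_right_mono) auto
    then show ?thesis using False by (simp add: abs_mult field_simps)
  qed
  moreover have "\<bar>?c\<bar> = real k * real (n - k) * \<bar>D\<bar> / real n"
    by (simp add: abs_mult)
  moreover have "\<bar>?c\<bar> - \<bar>?Sk\<bar> - \<bar>real k / real n * ?Sn\<bar> \<le> \<bar>?Sk - real k / real n * ?Sn - ?c\<bar>"
    using abs_triangle_ineq2[of ?c "?Sk - real k / real n * ?Sn"] abs_triangle_ineq4[of ?Sk "real k / real n * ?Sn"]
      abs_minus_commute[of ?c "?Sk - real k / real n * ?Sn"]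
    by linarith
  ultimately show ?thesis by linarith
qed (use assms in \<open>simp add: cusum_def\<close>)

lemma Tstat_cp_sample_gt:
  assumes Sk: "\<bar>\<Sum>i=1..k. Y (int i) \<omega>\<bar> \<le> B * sqrt (real n)"
    and Sn: "\<bar>\<Sum>i=1..n. Y (int i) \<omega>\<bar> \<le> B * sqrt (real n)"
    and s2: "s2 (cp_sample \<mu> D k Y \<omega>) n q \<le> K"
    and "0 \<le> B" "0 < K" "0 \<le> C"
    and drift: "2 * B + C * sqrt K < real k * real (n - k) * \<bar>D\<bar> / (real n * sqrt (real n))"
  shows "C < Tstat (cp_sample \<mu> D k Y \<omega>) n q"
proof -
  let ?x = "cp_sample \<mu> D k Y \<omega>"
  have "0 \<le> 2 * B + C * sqrt K"
    using \<open>0 \<le> B\<close> \<open>0 < K\<close> \<open>0 \<le> C\<close> by simp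
  then have "real k * real (n - k) * \<bar>D\<bar> / (real n * sqrt (real n)) \<noteq> 0"
    using drift by linarith
  then have "0 < k" "k < n"
    by auto
  then have sqrt_n: "0 < sqrt (real n)" by simp
  have "C * sqrt (real n) * sqrt K < real k * real (n - k) * \<bar>D\<bar> / real n - 2 * B * sqrt (real n)"
    using drift sqrt_n by (simp add: field_simps)
  also have "\<dots> \<le> cusum ?x n k"
    using cusum_cp_sample_ge[of k n D Y \<omega> \<mu>] Sk Sn \<open>k < n\<close> by linarith
  finally have cusum_big: "C * sqrt (real n) * sqrt K < cusum ?x n k" .
  \<comment> \<open>Otherwise Tstat would divide by zero and be 0.\<close>
  have "0 < s2 ?x n q"
  proof (rule ccontr)
    assume "\<not> 0 < s2 ?x n q"
    then have "s2 ?x n q = 0" using s2_nonneg[of ?x n q] by linarith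
    then have "cusum ?x n k = 0"
      using \<open>k < n\<close> by (simp add: cusum_eq_sum_centered centered_eq_0_if_s2_eq_0)
    moreover have "0 \<le> C * sqrt (real n) * sqrt K"
      using \<open>0 \<le> C\<close> \<open>0 < K\<close> by simp
    ultimately show False
      using cusum_big by linarith
  qed
  have "C < cusum ?x n k / (sqrt (real n) * sqrt K)"
    using cusum_big sqrt_n \<open>0 < K\<close> by (simp add: field_simps)
  also have "\<dots> \<le> cusum ?x n k / (sqrt (real n) * sqrt (s2 ?x n q))"
    using s2 \<open>0 < s2 ?x n q\<close> sqrt_n by (intro divide_left_mono mult_left_mono) (auto simp: cusum_def)
  also have "\<dots> \<le> Tstat ?x n q"
    unfolding Tstat_def using \<open>0 < k\<close> \<open>k < n\<close> sqrt_n \<open>0 < s2 ?x n q\<close>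
    by (intro divide_right_mono Max_ge) auto
  finally show ?thesis .
qed

lemma cp_drift_tendsto_at_top:
  fixes \<theta> :: real and \<Delta> :: "nat \<Rightarrow> real"
  assumes "0 < \<theta>" "\<theta> < 1" and "filterlim (\<lambda>n. real n * (\<Delta> n)\<^sup>2) at_top sequentially"
  shows "filterlim (\<lambda>n. real (nat \<lfloor>real n * \<theta>\<rfloor>) * real (n - nat \<lfloor>real n * \<theta>\<rfloor>) * \<bar>\<Delta> n\<bar>
    / (real n * sqrt (real n))) at_top sequentially"
proof -
  have "filterlim (\<lambda>n. \<theta> * (1 - \<theta>) / 2 * sqrt (real n * (\<Delta> n)\<^sup>2)) at_top sequentially"
    using assms by (intro filterlim_tendsto_pos_mult_at_top[OF tendsto_const]
        filterlim_compose[OF sqrt_at_top assms(3)]) auto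
  moreover have "\<forall>\<^sub>F n in sequentially. 2 \<le> real n * \<theta>"
  proof -
    have "\<forall>\<^sub>F n in sequentially. 2 / \<theta> \<le> real n"
      using filterlim_real_sequentially by (simp add: filterlim_at_top)
    then show ?thesis
      by eventually_elim (use assms in \<open>simp add: field_simps\<close>)
  qed
  then have "\<forall>\<^sub>F n in sequentially. \<theta> * (1 - \<theta>) / 2 * sqrt (real n * (\<Delta> n)\<^sup>2) \<le>
      real (nat \<lfloor>real n * \<theta>\<rfloor>) * real (n - nat \<lfloor>real n * \<theta>\<rfloor>) * \<bar>\<Delta> n\<bar> / (real n * sqrt (real n))"
  proof eventually_elim
    case (elim n)
    define k where "k = nat \<lfloor>real n * \<theta>\<rfloor>"
    have n: "0 < real n"
      using elim by (cases n) auto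
    have k: "real n * \<theta> - 1 \<le> real k" "real k \<le> real n * \<theta>"
      using assms(1) by (auto simp: k_def)
    moreover have "real n * \<theta> \<le> real n"
      using assms(2) by (simp add: mult_left_le)
    ultimately have "real n * \<theta> / 2 \<le> real k" "real n * (1 - \<theta>) \<le> real (n - k)"
      using elim by (auto simp: of_nat_diff algebra_simps)
    then have "real n * \<theta> / 2 * (real n * (1 - \<theta>)) \<le> real k * real (n - k)"
      using assms by (intro mult_mono) auto
    then have "real n * \<theta> / 2 * (real n * (1 - \<theta>)) * (\<bar>\<Delta> n\<bar> / (real n * sqrt (real n)))
        \<le> real k * real (n - k) * (\<bar>\<Delta> n\<bar> / (real n * sqrt (real n)))"
      by (rule mult_right_mono) simp
    moreover have "real n * \<theta> / 2 * (real n * (1 - \<theta>)) * (\<bar>\<Delta> n\<bar> / (real n * sqrt (real n)))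
        = \<theta> * (1 - \<theta>) / 2 * (real n * \<bar>\<Delta> n\<bar> / sqrt (real n))"
      using n by (simp add: field_simps)
    moreover have "sqrt (real n * (\<Delta> n)\<^sup>2) = real n * \<bar>\<Delta> n\<bar> / sqrt (real n)"
      using n by (simp add: real_sqrt_mult field_simps)
    ultimately show ?case
      by (simp add: k_def)
  qed
  ultimately show ?thesis by (rule filterlim_at_top_mono)
qed

definition cp_nuisance :: "(int \<Rightarrow> 'a \<Rightarrow> real) \<Rightarrow> real \<Rightarrow> real \<Rightarrow> nat \<Rightarrow> nat \<Rightarrow> nat \<Rightarrow> 'a \<Rightarrow> real" where
  "cp_nuisance Y \<mu> D k n q \<omega> =
     ((\<Sum>i=1..k. Y (int i) \<omega>)\<^sup>2 + (\<Sum>i=1..n. Y (int i) \<omega>)\<^sup>2) / real n + s2 (cp_sample \<mu> D k Y \<omega>) n q"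

definition cp_nuisance_majorant :: "(int \<Rightarrow> 'a \<Rightarrow> real) \<Rightarrow> real \<Rightarrow> nat \<Rightarrow> nat \<Rightarrow> nat \<Rightarrow> 'a \<Rightarrow> real" where
  "cp_nuisance_majorant Y D k n q \<omega> =
     ((\<Sum>i=1..k. Y (int i) \<omega>)\<^sup>2 + (\<Sum>i=1..n. Y (int i) \<omega>)\<^sup>2) / real n
     + 2 * s2_majorant (\<lambda>i. Y (int i) \<omega>) n q + 2 * ((real n + real q) * (real q + 1) * D\<^sup>2 / real n)"

lemma abs_cp_nuisance_le_majorant: "\<bar>cp_nuisance Y \<mu> D k n q \<omega>\<bar> \<le> cp_nuisance_majorant Y D k n q \<omega>"
proof -
  have "s2 (cp_sample \<mu> D k Y \<omega>) n q \<le>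
      2 * s2_majorant (\<lambda>i. Y (int i) \<omega>) n q + 2 * ((real n + real q) * (real q + 1) * D\<^sup>2 / real n)"
    using s2_cp_sample_le[of \<mu> D k Y \<omega> n q] s2_le_s2_majorant[of "\<lambda>i. Y (int i) \<omega>" n q] by linarith
  moreover have "0 \<le> cp_nuisance Y \<mu> D k n q \<omega>"
    by (simp add: cp_nuisance_def s2_nonneg)
  ultimately show ?thesis
    by (simp add: cp_nuisance_def cp_nuisance_majorant_def)
qed

lemma eventually_Tstat_gt_if_cp_nuisance_le:
  fixes \<theta> C L :: real and \<Delta> :: "nat \<Rightarrow> real"
  assumes "0 < \<theta>" "\<theta> < 1" and "filterlim (\<lambda>n. real n * (\<Delta> n)\<^sup>2) at_top sequentially"
  shows "\<forall>\<^sub>F n in sequentially. \<forall>\<omega>. cp_nuisance Y \<mu> (\<Delta> n) (nat \<lfloor>real n * \<theta>\<rfloor>) n (q n) \<omega> \<le> L \<longrightarrow>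
    C < Tstat (cp_sample \<mu> (\<Delta> n) (nat \<lfloor>real n * \<theta>\<rfloor>) Y \<omega>) n (q n)"
proof -
  define K where "K = max L 1"
  define C' where "C' = max C 0"
  have K_pos: "0 < K" by (simp add: K_def)
  have "\<forall>\<^sub>F n in sequentially. 2 * sqrt K + C' * sqrt K <
      real (nat \<lfloor>real n * \<theta>\<rfloor>) * real (n - nat \<lfloor>real n * \<theta>\<rfloor>) * \<bar>\<Delta> n\<bar> / (real n * sqrt (real n))"
    using cp_drift_tendsto_at_top[OF assms] by (simp add: filterlim_at_top_dense)
  then show ?thesis
    using eventually_gt_at_top[of 0]
  proof eventually_elim
    case (elim n)
    then have "0 < n" by simp
    show ?case
    proof (intro allI impI)
      fix \<omega>
      let ?k = "nat \<lfloor>real n * \<theta>\<rfloor>"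
      let ?Sk = "\<Sum>i=1..?k. Y (int i) \<omega>" and ?Sn = "\<Sum>i=1..n. Y (int i) \<omega>"
      assume "cp_nuisance Y \<mu> (\<Delta> n) ?k n (q n) \<omega> \<le> L"
      moreover have "0 \<le> (?Sk\<^sup>2 + ?Sn\<^sup>2) / real n" "0 \<le> s2 (cp_sample \<mu> (\<Delta> n) ?k Y \<omega>) n (q n)"
        by (simp_all add: s2_nonneg)
      moreover have "L \<le> K" by (simp add: K_def)
      ultimately have sums: "(?Sk\<^sup>2 + ?Sn\<^sup>2) / real n \<le> K" and s2: "s2 (cp_sample \<mu> (\<Delta> n) ?k Y \<omega>) n (q n) \<le> K"
        unfolding cp_nuisance_def by linarith+
      have "\<bar>S\<bar> \<le> sqrt K * sqrt (real n)" if "S\<^sup>2 \<le> ?Sk\<^sup>2 + ?Sn\<^sup>2" for S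
      proof -
        have "S\<^sup>2 \<le> K * real n"
          using that sums \<open>0 < n\<close> by (simp add: divide_le_eq)
        then show ?thesis
          by (metis real_sqrt_abs real_sqrt_le_mono real_sqrt_mult)
      qed
      then have "C' < Tstat (cp_sample \<mu> (\<Delta> n) ?k Y \<omega>) n (q n)"
        using elim s2 by (intro Tstat_cp_sample_gt) (use K_pos in \<open>auto simp: C'_def\<close>)
      then show "C < Tstat (cp_sample \<mu> (\<Delta> n) ?k Y \<omega>) n (q n)"
        by (simp add: C'_def)
    qed
  qed
qed

section \<open>Boundedness in probability\<close>

lemma (in prob_space) bounded_in_prob_if_expectation_bounded:
  assumes "\<And>n. integrable M (Z' n)" and "\<And>n \<omega>. \<omega> \<in> space M \<Longrightarrow> \<bar>Z n \<omega>\<bar> \<le> Z' n \<omega>"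
    and "\<forall>\<^sub>F n in sequentially. expectation (Z' n) \<le> B"
  shows "bounded_in_prob M Z"
  unfolding bounded_in_prob_def
proof (intro allI impI)
  fix \<epsilon> :: real assume "0 < \<epsilon>"
  define C where "C = (\<bar>B\<bar> + 1) / \<epsilon>"
  have "0 < C" using \<open>0 < \<epsilon>\<close> by (simp add: C_def add_pos_nonneg)
  obtain N0 where N0: "\<And>n. n \<ge> N0 \<Longrightarrow> expectation (Z' n) \<le> B"
    using assms(3) by (auto simp: eventually_sequentially)
  have "prob {\<omega>\<in>space M. \<bar>Z n \<omega>\<bar> > C} < \<epsilon>" if "n \<ge> N0" for n
  proof -
    have [measurable]: "Z' n \<in> borel_measurable M" using assms(1) by auto
    have "prob {\<omega>\<in>space M. \<bar>Z n \<omega>\<bar> > C} \<le> prob {\<omega>\<in>space M. Z' n \<omega> \<ge> C}"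
      using assms(2) by (intro finite_measure_mono) (auto intro: order.trans[OF less_imp_le])
    also have "\<dots> \<le> expectation (Z' n) / C"
    proof (rule integral_Markov_inequality_measure[where A = "space M"])
      show "AE \<omega> in M. 0 \<le> Z' n \<omega>"
        using assms(2) by (intro AE_I2) (meson abs_ge_zero order.trans)
    qed (use assms(1) \<open>0 < C\<close> in auto)
    also have "\<dots> \<le> \<bar>B\<bar> / C"
      using N0[OF that] \<open>0 < C\<close> by (intro divide_right_mono) auto
    also have "\<dots> < \<epsilon>"
      using \<open>0 < \<epsilon>\<close> by (simp add: C_def field_simps)
    finally show ?thesis .
  qed
  then show "\<exists>C N0. \<forall>n\<ge>N0. prob {\<omega>\<in>space M. \<bar>Z n \<omega>\<bar> > C} < \<epsilon>"
    by blast
qed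

lemma (in prob_space) prob_tendsto_1_if_bounded_in_prob:
  assumes "bounded_in_prob M Z" and [measurable]: "\<And>n. Z n \<in> borel_measurable M"
    and [measurable]: "\<And>n. {\<omega>\<in>space M. P n \<omega>} \<in> sets M"
    and "\<And>L. \<forall>\<^sub>F n in sequentially. \<forall>\<omega>\<in>space M. \<bar>Z n \<omega>\<bar> \<le> L \<longrightarrow> P n \<omega>"
  shows "(\<lambda>n. prob {\<omega>\<in>space M. P n \<omega>}) \<longlonglongrightarrow> 1"
proof (rule order_tendstoI)
  fix a :: real assume "a < 1"
  then obtain L N0 where L: "\<And>n. n \<ge> N0 \<Longrightarrow> prob {\<omega>\<in>space M. \<bar>Z n \<omega>\<bar> > L} < 1 - a"
    using assms(1) unfolding bounded_in_prob_def by (meson diff_gt_0_iff_gt)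
  show "\<forall>\<^sub>F n in sequentially. a < prob {\<omega>\<in>space M. P n \<omega>}"
    using assms(4)[of L] eventually_ge_at_top[of N0]
  proof eventually_elim
    case (elim n)
    have "1 - prob {\<omega>\<in>space M. \<bar>Z n \<omega>\<bar> > L} = prob (space M - {\<omega>\<in>space M. \<bar>Z n \<omega>\<bar> > L})"
      by (rule prob_compl[symmetric]) measurable
    also have "\<dots> \<le> prob {\<omega>\<in>space M. P n \<omega>}"
      using elim(1) by (intro finite_measure_mono) auto
    finally show ?case using L[OF elim(2)] by linarith
  qed
qed (intro always_eventually allI, auto intro: le_less_trans[OF prob_le_1])

section \<open>Noise with summable autocovariances\<close>

locale stationary_noise = prob_space M for M :: "'a measure" +
  fixes Y :: "int \<Rightarrow> 'a \<Rightarrow> real"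
  assumes stationary: "fourth_order_stationary M Y"
    and mean_zero: "\<And>k. expectation (Y k) = 0"
    and abs_autocov_summable: "(\<lambda>j. \<bar>autocov M Y j\<bar>) summable_on UNIV"
begin

definition abs_autocov_sum :: real where
  "abs_autocov_sum = (\<Sum>\<^sub>\<infinity>j. \<bar>autocov M Y j\<bar>)"

lemma abs_autocov_sum_nonneg: "0 \<le> abs_autocov_sum"
  unfolding abs_autocov_sum_def by (rule infsum_nonneg) simp

lemma measurable_Y [measurable]: "Y k \<in> borel_measurable M"
  using stationary by (simp add: fourth_order_stationary_def)

lemma integrable_Y_sq: "integrable M (\<lambda>\<omega>. (Y k \<omega>)\<^sup>2)"
proof (rule Bochner_Integration.integrable_bound)
  show "integrable M (\<lambda>\<omega>. 1 + (Y k \<omega>) ^ 4)"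
    using stationary by (simp add: fourth_order_stationary_def)
  have "y\<^sup>2 \<le> 1 + y ^ 4" for y :: real
  proof -
    have "2 * y\<^sup>2 \<le> y ^ 4 + 1" using sum_squares_bound[of "y\<^sup>2" 1] by simp
    with zero_le_power2[of y] show ?thesis by linarith
  qed
  then show "AE \<omega> in M. norm ((Y k \<omega>)\<^sup>2) \<le> norm (1 + (Y k \<omega>) ^ 4)"
    by (intro AE_I2) (simp add: add_nonneg_nonneg)
qed simp

lemma integrable_Y_mult: "integrable M (\<lambda>\<omega>. Y i \<omega> * Y j \<omega>)"
proof (rule Bochner_Integration.integrable_bound)
  show "integrable M (\<lambda>\<omega>. (Y i \<omega>)\<^sup>2 + (Y j \<omega>)\<^sup>2)"
    using integrable_Y_sq by simp
  have "\<bar>a * b\<bar> \<le> a\<^sup>2 + b\<^sup>2" for a b :: real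
  proof -
    have "2 * \<bar>a\<bar> * \<bar>b\<bar> \<le> a\<^sup>2 + b\<^sup>2" using sum_squares_bound[of "\<bar>a\<bar>" "\<bar>b\<bar>"] by simp
    moreover have "0 \<le> \<bar>a\<bar> * \<bar>b\<bar>" by simp
    ultimately show ?thesis by (simp only: abs_mult)
  qed
  then show "AE \<omega> in M. norm (Y i \<omega> * Y j \<omega>) \<le> norm ((Y i \<omega>)\<^sup>2 + (Y j \<omega>)\<^sup>2)"
    by (intro AE_I2) simp
qed simp

lemma expectation_Y_mult: "expectation (\<lambda>\<omega>. Y i \<omega> * Y j \<omega>) = autocov M Y (j - i)"
proof -
  have "length is \<le> 4 \<Longrightarrow> expectation (\<lambda>\<omega>. prod_list (map (\<lambda>l. Y (l + c) \<omega>) is)) =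
      expectation (\<lambda>\<omega>. prod_list (map (\<lambda>l. Y l \<omega>) is))" for "is" c
    using stationary unfolding fourth_order_stationary_def by blast
  from this[of "[0, j - i]" i] show ?thesis
    using mean_zero by (simp add: autocov_def)
qed

lemma sum_abs_autocov_le:
  assumes "finite J"
  shows "(\<Sum>j\<in>J. \<bar>autocov M Y (int j - int i)\<bar>) \<le> abs_autocov_sum"
proof -
  have "inj_on (\<lambda>j. int j - int i) J" by (auto simp: inj_on_def)
  then have "(\<Sum>j\<in>J. \<bar>autocov M Y (int j - int i)\<bar>) = (\<Sum>h\<in>(\<lambda>j. int j - int i) ` J. \<bar>autocov M Y h\<bar>)"
    by (simp add: sum.reindex)
  also have "\<dots> \<le> abs_autocov_sum"
    unfolding abs_autocov_sum_def
    using abs_autocov_summable assms by (intro finite_sum_le_infsum) auto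
  finally show ?thesis .
qed

lemma partial_sum_sq_eq: "(\<lambda>\<omega>. (\<Sum>i\<in>I. Y (int i) \<omega>)\<^sup>2) = (\<lambda>\<omega>. \<Sum>i\<in>I. \<Sum>j\<in>I. Y (int i) \<omega> * Y (int j) \<omega>)"
  by (simp add: power2_eq_square sum_product)

lemma integrable_partial_sum_sq: "integrable M (\<lambda>\<omega>. (\<Sum>i\<in>I. Y (int i) \<omega>)\<^sup>2)"
  unfolding partial_sum_sq_eq by (intro Bochner_Integration.integrable_sum integrable_Y_mult)

lemma expectation_partial_sum_sq_le:
  assumes "finite I"
  shows "expectation (\<lambda>\<omega>. (\<Sum>i\<in>I. Y (int i) \<omega>)\<^sup>2) \<le> real (card I) * abs_autocov_sum"
proof -
  have "expectation (\<lambda>\<omega>. (\<Sum>i\<in>I. Y (int i) \<omega>)\<^sup>2) = (\<Sum>i\<in>I. \<Sum>j\<in>I. autocov M Y (int j - int i))"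
    unfolding partial_sum_sq_eq
    by (simp add: Bochner_Integration.integral_sum integrable_Y_mult expectation_Y_mult)
  also have "\<dots> \<le> (\<Sum>i\<in>I. \<Sum>j\<in>I. \<bar>autocov M Y (int j - int i)\<bar>)"
    by (intro sum_mono) simp
  also have "\<dots> \<le> (\<Sum>i\<in>I. abs_autocov_sum)"
    by (intro sum_mono sum_abs_autocov_le assms)
  finally show ?thesis by simp
qed

lemma integrable_s2_majorant: "integrable M (\<lambda>\<omega>. s2_majorant (\<lambda>i. Y (int i) \<omega>) n q)"
  unfolding s2_majorant_def xbar_def power_divide
  by (intro Bochner_Integration.integrable_add Bochner_Integration.integrable_divide
      Bochner_Integration.integrable_mult_right Bochner_Integration.integrable_sum integrable_partial_sum_sq)

lemma expectation_s2_majorant_le: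
  assumes "q < n"
  shows "expectation (\<lambda>\<omega>. s2_majorant (\<lambda>i. Y (int i) \<omega>) n q) \<le> 8 * abs_autocov_sum"
proof -
  let ?G = abs_autocov_sum
  have G: "0 \<le> ?G" by (rule abs_autocov_sum_nonneg)
  have "(\<Sum>t\<in>{1..n+q}. expectation (\<lambda>\<omega>. (\<Sum>i\<in>window n q t. Y (int i) \<omega>)\<^sup>2))
      \<le> (\<Sum>t\<in>{1..n+q}. (real q + 1) * ?G)"
  proof (intro sum_mono)
    fix t
    have "expectation (\<lambda>\<omega>. (\<Sum>i\<in>window n q t. Y (int i) \<omega>)\<^sup>2) \<le> real (card (window n q t)) * ?G"
      by (rule expectation_partial_sum_sq_le) (simp add: window_def)
    also have "\<dots> \<le> (real q + 1) * ?G"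
      using card_window_le[of n q t] G by (intro mult_right_mono) auto
    finally show "expectation (\<lambda>\<omega>. (\<Sum>i\<in>window n q t. Y (int i) \<omega>)\<^sup>2) \<le> (real q + 1) * ?G" .
  qed
  then have windows: "2 * (\<Sum>t\<in>{1..n+q}. expectation (\<lambda>\<omega>. (\<Sum>i\<in>window n q t. Y (int i) \<omega>)\<^sup>2))
      / (real n * (real q + 1)) \<le> 2 * (\<Sum>t\<in>{1..n+q}. (real q + 1) * ?G) / (real n * (real q + 1))"
    by (intro divide_right_mono mult_left_mono) auto
  have "expectation (\<lambda>\<omega>. (\<Sum>i=1..n. Y (int i) \<omega>)\<^sup>2) \<le> real n * ?G"
    using expectation_partial_sum_sq_le[of "{1..n}"] by simp
  then have mean: "2 * (real n + real q) * (real q + 1) / real n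
        * (expectation (\<lambda>\<omega>. (\<Sum>i=1..n. Y (int i) \<omega>)\<^sup>2) / (real n)\<^sup>2)
      \<le> 2 * (real n + real q) * (real q + 1) / real n * (real n * ?G / (real n)\<^sup>2)"
    by (intro mult_left_mono divide_right_mono) auto
  have "expectation (\<lambda>\<omega>. s2_majorant (\<lambda>i. Y (int i) \<omega>) n q) =
      2 * (\<Sum>t\<in>{1..n+q}. expectation (\<lambda>\<omega>. (\<Sum>i\<in>window n q t. Y (int i) \<omega>)\<^sup>2)) / (real n * (real q + 1))
      + 2 * (real n + real q) * (real q + 1) / real n
        * (expectation (\<lambda>\<omega>. (\<Sum>i=1..n. Y (int i) \<omega>)\<^sup>2) / (real n)\<^sup>2)"
    unfolding s2_majorant_def xbar_def power_divide
    by (simp add: integrable_partial_sum_sq Bochner_Integration.integral_sum)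
  also have "\<dots> \<le> 2 * (\<Sum>t\<in>{1..n+q}. (real q + 1) * ?G) / (real n * (real q + 1))
        + 2 * (real n + real q) * (real q + 1) / real n * (real n * ?G / (real n)\<^sup>2)"
    using windows mean by (rule add_mono)
  also have "\<dots> = 2 * ((real n + real q) / real n) * ?G * (1 + (real q + 1) / real n)"
    using assms by (simp add: divide_simps power2_eq_square) (simp add: algebra_simps)
  also have "\<dots> \<le> 2 * 2 * ?G * 2"
    using assms G by (intro mult_mono) (auto simp: field_simps)
  finally show ?thesis by simp
qed

lemma measurable_cp_nuisance [measurable]: "cp_nuisance Y \<mu> D k n q \<in> borel_measurable M"
  unfolding cp_nuisance_def s2_def gamma_hat_def xbar_def cp_sample_def by measurable

lemma measurable_Tstat_cp_sample [measurable]: "(\<lambda>\<omega>. Tstat (cp_sample \<mu> D k Y \<omega>) n q) \<in> borel_measurable M"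
  unfolding Tstat_def cusum_def s2_def gamma_hat_def xbar_def cp_sample_def by measurable

lemma integrable_cp_nuisance_majorant: "integrable M (cp_nuisance_majorant Y D k n q)"
  unfolding cp_nuisance_majorant_def by (simp add: integrable_partial_sum_sq integrable_s2_majorant)

lemma expectation_cp_nuisance_majorant_le:
  assumes "k \<le> n" "0 < q" "q < n"
  shows "expectation (cp_nuisance_majorant Y D k n q) \<le> 18 * abs_autocov_sum + 8 * (real q * D\<^sup>2)"
proof -
  let ?G = abs_autocov_sum
  have "expectation (cp_nuisance_majorant Y D k n q) =
      (expectation (\<lambda>\<omega>. (\<Sum>i=1..k. Y (int i) \<omega>)\<^sup>2) + expectation (\<lambda>\<omega>. (\<Sum>i=1..n. Y (int i) \<omega>)\<^sup>2)) / real n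
      + 2 * expectation (\<lambda>\<omega>. s2_majorant (\<lambda>i. Y (int i) \<omega>) n q)
      + 2 * ((real n + real q) * (real q + 1) * D\<^sup>2 / real n)"
    unfolding cp_nuisance_majorant_def
    by (simp add: integrable_partial_sum_sq integrable_s2_majorant prob_space)
  also have "\<dots> \<le> (real n * ?G + real n * ?G) / real n + 2 * (8 * ?G) + 2 * (2 * (2 * (real q * D\<^sup>2)))"
  proof (intro add_mono mult_left_mono divide_right_mono)
    have "real k * ?G \<le> real n * ?G"
      using assms(1) abs_autocov_sum_nonneg by (intro mult_right_mono) auto
    then show "expectation (\<lambda>\<omega>. (\<Sum>i=1..k. Y (int i) \<omega>)\<^sup>2) \<le> real n * ?G"
      using expectation_partial_sum_sq_le[of "{1..k}"] by simp
    show "expectation (\<lambda>\<omega>. (\<Sum>i=1..n. Y (int i) \<omega>)\<^sup>2) \<le> real n * ?G"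
      using expectation_partial_sum_sq_le[of "{1..n}"] by simp
    show "expectation (\<lambda>\<omega>. s2_majorant (\<lambda>i. Y (int i) \<omega>) n q) \<le> 8 * ?G"
      using assms(3) by (rule expectation_s2_majorant_le)
    have "(real n + real q) / real n \<le> 2"
      using assms(3) by (simp add: divide_le_eq)
    moreover have "(real q + 1) * D\<^sup>2 \<le> 2 * (real q * D\<^sup>2)"
    proof -
      have "real q + 1 \<le> 2 * real q"
        using assms(2) by simp
      then show ?thesis
        by (simp add: mult_right_mono flip: mult.assoc)
    qed
    ultimately have "(real n + real q) / real n * ((real q + 1) * D\<^sup>2) \<le> 2 * (2 * (real q * D\<^sup>2))"
      by (rule mult_mono) auto
    then show "(real n + real q) * (real q + 1) * D\<^sup>2 / real n \<le> 2 * (2 * (real q * D\<^sup>2))"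
      by (simp add: mult.assoc)
  qed auto
  also have "\<dots> = 18 * ?G + 8 * (real q * D\<^sup>2)"
    using assms by simp
  finally show ?thesis .
qed

lemma bounded_in_prob_cp_nuisance:
  fixes \<Delta> :: "nat \<Rightarrow> real" and k q :: "nat \<Rightarrow> nat"
  assumes "(\<lambda>n. real (q n) * (\<Delta> n)\<^sup>2) \<in> O(\<lambda>_. 1)" and "\<And>n. 0 < q n"
    and "(\<lambda>n. real (q n) / real n) \<longlonglongrightarrow> 0" and "\<And>n. k n \<le> n"
  shows "bounded_in_prob M (\<lambda>n. cp_nuisance Y \<mu> (\<Delta> n) (k n) n (q n))"
proof -
  obtain B where "\<forall>\<^sub>F n in sequentially. \<bar>real (q n) * (\<Delta> n)\<^sup>2\<bar> \<le> B"
    using assms(1) by (auto elim!: landau_o.bigE)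
  moreover have "\<forall>\<^sub>F n in sequentially. real (q n) / real n < 1"
    using assms(3) by (rule order_tendstoD) simp
  ultimately have "\<forall>\<^sub>F n in sequentially.
      expectation (cp_nuisance_majorant Y (\<Delta> n) (k n) n (q n)) \<le> 18 * abs_autocov_sum + 8 * B"
    using eventually_gt_at_top[of 0]
  proof eventually_elim
    case (elim n)
    then have "q n < n" by (simp add: field_simps)
    with assms(2,4) have "expectation (cp_nuisance_majorant Y (\<Delta> n) (k n) n (q n))
        \<le> 18 * abs_autocov_sum + 8 * (real (q n) * (\<Delta> n)\<^sup>2)"
      by (intro expectation_cp_nuisance_majorant_le)
    with elim(1) show ?case by simp
  qed
  then show ?thesis
    by (rule bounded_in_prob_if_expectation_bounded[rotated 2])
      (auto intro: integrable_cp_nuisance_majorant abs_cp_nuisance_le_majorant)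
qed

end

theorem theorem3p2:
  fixes M :: "'a measure" and Y :: "int \<Rightarrow> 'a \<Rightarrow> real"
    and N :: "'b measure" and W :: "real \<Rightarrow> 'b \<Rightarrow> real"
    and \<mu> \<theta> \<sigma> :: real and \<Delta> :: "nat \<Rightarrow> real" and q :: "nat \<Rightarrow> nat"
  assumes "prob_space M"
    and "fourth_order_stationary M Y"
    and "\<forall>k. (\<integral>\<omega>. Y k \<omega> \<partial>M) = 0"
    and "\<sigma> > 0" and "std_BM_01 N W"
    and "conv_dist_D M (partial_sum_proc Y) N (\<lambda>\<omega> t. \<sigma> * W t \<omega>)"
    and "(\<lambda>j. \<bar>autocov M Y j\<bar>) summable_on UNIV"
    and "\<exists>B. \<forall>h. (\<lambda>(r, s). \<bar>cum4 M Y h r s\<bar>) summable_on UNIV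
                \<and> (\<Sum>\<^sub>\<infinity>(r, s). \<bar>cum4 M Y h r s\<bar>) \<le> B"
    and "0 < \<theta>" and "\<theta> < 1"
    and "filterlim (\<lambda>n. real n * (\<Delta> n)\<^sup>2) at_top sequentially"
    and "bounded_in_prob M (\<lambda>n \<omega>. (\<Delta> n)\<^sup>2 *
           \<bar>real (khat (cp_sample \<mu> (\<Delta> n) (nat \<lfloor>real n * \<theta>\<rfloor>) Y \<omega>) n)
            - real (nat \<lfloor>real n * \<theta>\<rfloor>)\<bar>)"
    and "(\<lambda>n. real (q n) * (\<Delta> n)\<^sup>2) \<in> O(\<lambda>_. 1)"
    and "\<forall>n. q n > 0"
    and "filterlim q at_top sequentially"
    and "(\<lambda>n. real (q n) / real n) \<longlonglongrightarrow> 0"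
  shows "\<forall>C. (\<lambda>n. measure M {\<omega>\<in>space M.
            Tstat (cp_sample \<mu> (\<Delta> n) (nat \<lfloor>real n * \<theta>\<rfloor>) Y \<omega>) n (q n) > C}) \<longlonglongrightarrow> 1"
proof
  fix C
  interpret stationary_noise M Y
    by (intro stationary_noise.intro stationary_noise_axioms.intro assms(1,2,7)) (use assms(3) in simp)
  let ?k = "\<lambda>n. nat \<lfloor>real n * \<theta>\<rfloor>"
  have "?k n \<le> n" for n
  proof -
    have "real (?k n) \<le> real n * \<theta>"
      using assms(9) by simp
    also have "\<dots> \<le> real n"
      using assms(10) by (simp add: mult_left_le)
    finally show ?thesis by simp
  qed
  then have "bounded_in_prob M (\<lambda>n. cp_nuisance Y \<mu> (\<Delta> n) (?k n) n (q n))"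
    using assms(14) by (intro bounded_in_prob_cp_nuisance[OF assms(13) _ assms(16)]) auto
  then show "(\<lambda>n. prob {\<omega>\<in>space M. Tstat (cp_sample \<mu> (\<Delta> n) (?k n) Y \<omega>) n (q n) > C}) \<longlonglongrightarrow> 1"
  proof (rule prob_tendsto_1_if_bounded_in_prob)
    show "\<forall>\<^sub>F n in sequentially. \<forall>\<omega>\<in>space M.
        \<bar>cp_nuisance Y \<mu> (\<Delta> n) (?k n) n (q n) \<omega>\<bar> \<le> L \<longrightarrow> C < Tstat (cp_sample \<mu> (\<Delta> n) (?k n) Y \<omega>) n (q n)" for L
      using eventually_Tstat_gt_if_cp_nuisance_le[OF assms(9-11), of Y \<mu> q L C]
      by eventually_elim auto
    show "{\<omega>\<in>space M. C < Tstat (cp_sample \<mu> (\<Delta> n) (?k n) Y \<omega>) n (q n)} \<in> sets M" for n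
      using measurable_Tstat_cp_sample unfolding borel_measurable_iff_greater by blast
  qed (rule measurable_cp_nuisance)
qed

end
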